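(* Fix $n\ge 2$ and let, for $1\le i\le n$, $(a_i,a_i',a_i'')$ be triples of regular closed subsets of $\mathbb{R}^2$ with $a_i''\neq\emptyset$, $a_i''\cap\overline{\mathbb{R}^2\setminus a_i'}=\emptyset$ and $a_i'\cap\overline{\mathbb{R}^2\setminus a_i}=\emptyset$, such that: $a_i'\cup a_{i+1}''\cup\dots\cup a_n''$ is connected for each $1\le i\le n-1$; $a_n'$ is connected; and $a_i\cap a_j=\emptyset$ for all $1\le i,j\le n$ with $j-i>1$. Then for every point $p_0\in a_1'$ and every point $p_n\in a_n''$ there exist points $p_1,\dots,p_{n-1}$ and Jordan arcs $\alpha_1,\dots,\alpha_n$ such that: (i) the concatenation $\alpha=\alpha_1\cdots\alpha_n$ is a Jordan arc from $p_0$ to $p_n$; (ii) $p_i\in a_{i+1}'\cap\alpha_i$ for all $1\le i<n$; and (iii) $\alpha_i\subseteq a_i$ for all $1\le i\le n$.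
   Context: A Jordan arc is a continuous injective map $[0,1]\to\mathbb{R}^2$ or a constant map, identified with its image. The concatenation $\alpha_1\cdots\alpha_n$ being a Jordan arc from $p_0$ to $p_n$ means each $\alpha_i$ ends where $\alpha_{i+1}$ begins, $\alpha_1$ starts at $p_0$, $\alpha_n$ ends at $p_n$, and the union traversed in order is a Jordan arc. *)

theory Defs
  imports "HOL-Analysis.Analysis"
begin

definition regular_closed :: "'a::topological_space set \<Rightarrow> bool" where
  "regular_closed S \<longleftrightarrow> closure (interior S) = S"

definition jordan_arc :: "(real \<Rightarrow> 'a::topological_space) \<Rightarrow> bool" where
  "jordan_arc g \<longleftrightarrow> arc g \<or> (\<exists>c. \<forall>t\<in>{0..1}. g t = c)"

fun join_list :: "(real \<Rightarrow> 'a::topological_space) list \<Rightarrow> (real \<Rightarrow> 'a)" where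
  "join_list [] = (\<lambda>t. undefined)"
| "join_list [g] = g"
| "join_list (g # gs) = g +++ join_list gs"

text \<open>A concatenation of Jordan arcs (some possibly constant) "traversed in order is a
  Jordan arc": the concatenated path is continuous and only repeats a point by staying
  at it, i.e. all its fibres over [0,1] are intervals (so, after collapsing the constant
  pieces, it is injective).\<close>
definition traversed_jordan_arc :: "(real \<Rightarrow> 'a::topological_space) \<Rightarrow> bool" where
  "traversed_jordan_arc g \<longleftrightarrow> path g \<and>
     (\<forall>s t. 0 \<le> s \<and> s \<le> t \<and> t \<le> 1 \<and> g s = g t \<longrightarrow> (\<forall>u\<in>{s..t}. g u = g s))"

end

theory Submission
  imports Defs
begin

text \<open>When the arcs up to the \<open>(i-1)\<close>-st end
  at a point \<open>q \<in> a' i\<close>, the \<open>i\<close>-th arc runs inside \<open>interior (a i)\<close> from \<open>q\<close> to the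
  first point of \<open>a' (i+1)\<close> it meets, avoiding the \<open>(i-1)\<close>-st arc \<open>F\<close> except at \<open>q\<close>.
  It exists because the connected set \<open>a' i \<union> a'' (i+1) \<union> \<dots> \<union> a'' n\<close> meets \<open>F\<close> only
  at \<open>q\<close>, and its points outside \<open>interior (a i)\<close> lie in \<open>interior (a' (i+1))\<close> or
  outside \<open>a i\<close>; a clopen argument then shows that the path component of
  \<open>interior (a i) - F\<close> next to \<open>q\<close> meets \<open>a' (i+1)\<close>.  To be able to leave \<open>q\<close>
  without crossing \<open>F\<close>, every arc is made to end along a straight segment.  Arcs that
  are not consecutive lie in disjoint sets \<open>a i\<close>, so the concatenation is a Jordan arc.\<close>

section \<open>Sets ending along a ray\<close>

definition ray :: "'a::real_vector \<Rightarrow> 'a \<Rightarrow> 'a set" where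
  "ray y u = {y + s *\<^sub>R u | s. 0 \<le> s}"

definition locally_in_ray :: "'a::real_normed_vector set \<Rightarrow> 'a \<Rightarrow> bool" where
  "locally_in_ray S y \<longleftrightarrow> (\<exists>u\<noteq>0. \<exists>\<delta>>0. S \<inter> ball y \<delta> \<subseteq> ray y u)"

lemma locally_in_ray_subset: "locally_in_ray S y \<Longrightarrow> T \<subseteq> S \<Longrightarrow> locally_in_ray T y"
  unfolding locally_in_ray_def by blast

lemma tip_in_ray: "y \<in> ray y u"
  unfolding ray_def by force

lemma locally_in_ray_singleton: "locally_in_ray {y :: 'a::euclidean_space} y"
proof -
  obtain b :: 'a where "b \<in> Basis"
    using nonempty_Basis by blast
  then show ?thesis
    unfolding locally_in_ray_def using tip_in_ray nonzero_Basis zero_less_one by blast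
qed

lemma closed_segment_subset_ray: "closed_segment y w \<subseteq> ray y (w - y)"
proof
  fix z assume "z \<in> closed_segment y w"
  then obtain t where "0 \<le> t" "z = y + t *\<^sub>R (w - y)"
    unfolding in_segment by (auto simp: algebra_simps)
  then show "z \<in> ray y (w - y)"
    unfolding ray_def by blast
qed

lemma interior_ray:
  fixes y u :: "'a::euclidean_space"
  assumes "2 \<le> DIM('a)"
  shows "interior (ray y u) = {}"
proof -
  have "ray y u \<subseteq> affine hull {y, y + u}"
  proof
    fix z assume "z \<in> ray y u"
    then obtain s where "z = (1 - s) *\<^sub>R y + s *\<^sub>R (y + u)"
      unfolding ray_def by (auto simp: algebra_simps)
    then show "z \<in> affine hull {y, y + u}"
      unfolding affine_hull_2 by force
  qed
  moreover have "interior (affine hull {y, y + u}) = {}"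
    using assms by (intro empty_interior_affine_hull) (auto simp: card_insert_if)
  ultimately show ?thesis
    using interior_mono by blast
qed

lemma closed_segment_from_behind_tip_disjoint_ray:
  fixes y u x :: "'a::real_vector"
  assumes u: "u \<noteq> 0" and c: "0 < c" and x: "x \<notin> ray y u"
  shows "closed_segment (y - c *\<^sub>R u) x \<inter> ray y u = {}"
proof (rule ccontr)
  assume "closed_segment (y - c *\<^sub>R u) x \<inter> ray y u \<noteq> {}"
  then obtain z where z_seg: "z \<in> closed_segment (y - c *\<^sub>R u) x" and z_ray: "z \<in> ray y u"
    by blast
  from z_seg obtain t where t: "0 \<le> t" "t \<le> 1" and z1: "z = (1 - t) *\<^sub>R (y - c *\<^sub>R u) + t *\<^sub>R x"
    unfolding in_segment by blast
  from z_ray obtain s where s: "0 \<le> s" and z2: "z = y + s *\<^sub>R u"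
    unfolding ray_def by blast
  have z: "(1 - t) *\<^sub>R (y - c *\<^sub>R u) + t *\<^sub>R x = y + s *\<^sub>R u"
    using z1 z2 by simp
  have "t *\<^sub>R x = (y + s *\<^sub>R u) - (1 - t) *\<^sub>R (y - c *\<^sub>R u)"
    by (simp add: z[symmetric])
  also have "\<dots> = t *\<^sub>R y + (s + (1 - t) * c) *\<^sub>R u"
    by (simp add: algebra_simps)
  finally have eq: "t *\<^sub>R x = t *\<^sub>R y + (s + (1 - t) * c) *\<^sub>R u" .
  show False
  proof (cases "t = 0")
    case True
    then show False
      using eq u s c by (simp add: add_pos_nonneg)
  next
    case False
    then have "x = y + ((s + (1 - t) * c) / t) *\<^sub>R u"
      using arg_cong[OF eq, of "scaleR (1 / t)"] by (simp add: scaleR_add_right)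
    moreover have "0 \<le> (s + (1 - t) * c) / t"
      using s t c by simp
    ultimately show False
      using x unfolding ray_def by blast
  qed
qed

lemma closed_segment_behind_tip_Int_ray:
  fixes y u :: "'a::real_vector"
  assumes u: "u \<noteq> 0" and c: "0 \<le> c"
  shows "closed_segment y (y - c *\<^sub>R u) \<inter> ray y u \<subseteq> {y}"
proof
  fix z assume z: "z \<in> closed_segment y (y - c *\<^sub>R u) \<inter> ray y u"
  then have "z \<in> closed_segment y (y - c *\<^sub>R u)"
    by blast
  then obtain t where t: "0 \<le> t" and "z = (1 - t) *\<^sub>R y + t *\<^sub>R (y - c *\<^sub>R u)"
    unfolding in_segment by blast
  then have zt: "z = y - (t * c) *\<^sub>R u"
    by (simp add: algebra_simps)
  obtain s where s: "0 \<le> s" and zs: "z = y + s *\<^sub>R u"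
    using z unfolding ray_def by blast
  have "(s + t * c) *\<^sub>R u = (y + s *\<^sub>R u) - (y - (t * c) *\<^sub>R u)"
    by (simp add: algebra_simps)
  also have "\<dots> = 0"
    using zt zs by simp
  finally have "s + t * c = 0"
    using u by simp
  moreover have "0 \<le> t * c"
    using t c by simp
  ultimately have "s = 0"
    using s by linarith
  then show "z \<in> {y}"
    using zs by simp
qed

section \<open>Concatenations of Jordan arcs\<close>

lemma jordan_arc_linepath_refl: "jordan_arc (linepath p p)"
  unfolding jordan_arc_def by simp

lemma jordan_arc_imp_path: "jordan_arc g \<Longrightarrow> path g"
  unfolding jordan_arc_def
proof (elim disjE exE)
  fix c assume "\<forall>t\<in>{0..1}. g t = c"
  then show "path g"
    unfolding path_def by (metis continuous_on_const continuous_on_eq)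
qed (rule arc_imp_path)

lemma exists_jordan_arc_in_path_image:
  fixes g :: "real \<Rightarrow> 'a::euclidean_space"
  assumes "path g"
  obtains \<alpha> where "jordan_arc \<alpha>" "pathstart \<alpha> = pathstart g" "pathfinish \<alpha> = pathfinish g"
    "path_image \<alpha> \<subseteq> path_image g"
proof (cases "pathstart g = pathfinish g")
  case True
  show ?thesis
  proof (rule that)
    show "jordan_arc (linepath (pathstart g) (pathstart g))"
      by (rule jordan_arc_linepath_refl)
  qed (use True pathstart_in_path_image in auto)
next
  case False
  then obtain \<alpha> where "arc \<alpha>" "path_image \<alpha> \<subseteq> path_image g" "pathstart \<alpha> = pathstart g"
    "pathfinish \<alpha> = pathfinish g"
    using path_contains_arc[OF assms] by blast
  then show ?thesis
    using that unfolding jordan_arc_def by blast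
qed

lemma traversed_jordan_arcD:
  assumes "traversed_jordan_arc g" "0 \<le> s" "s \<le> u" "u \<le> t" "t \<le> 1" "g s = g t"
  shows "g u = g s"
proof -
  have "s \<le> t"
    using assms(3,4) by linarith
  then show ?thesis
    by (intro conjunct2[OF assms(1)[unfolded traversed_jordan_arc_def], rule_format])
      (use assms in auto)
qed

lemma jordan_arc_imp_traversed_jordan_arc:
  assumes "jordan_arc g"
  shows "traversed_jordan_arc g"
  unfolding traversed_jordan_arc_def
proof (intro conjI allI impI ballI)
  show "path g"
    using assms by (rule jordan_arc_imp_path)
  fix s t u assume st: "0 \<le> s \<and> s \<le> t \<and> t \<le> 1 \<and> g s = g t" and u: "u \<in> {s..t}"
  show "g u = g s"
  proof (cases "arc g")
    case True
    then have "s = t"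
      using st arcD[of g s t] by simp
    then show ?thesis
      using u by simp
  next
    case False
    then obtain c where "\<forall>t\<in>{0..1}. g t = c"
      using assms unfolding jordan_arc_def by blast
    then show ?thesis
      using st u by simp
  qed
qed

text \<open>When the two halves meet at a common point of both, the first path has already
  reached its endpoint and the second has not yet left its start point.\<close>
lemma traversed_jordan_arc_join:
  assumes g1: "traversed_jordan_arc g1" and g2: "traversed_jordan_arc g2"
    and ends: "pathfinish g1 = pathstart g2"
    and meet: "path_image g1 \<inter> path_image g2 \<subseteq> {pathstart g2}"
  shows "traversed_jordan_arc (g1 +++ g2)"
  unfolding traversed_jordan_arc_def
proof (intro conjI allI impI ballI)
  show "path (g1 +++ g2)"
    using g1 g2 ends unfolding traversed_jordan_arc_def by auto
  fix s t u
  assume st: "0 \<le> s \<and> s \<le> t \<and> t \<le> 1 \<and> (g1 +++ g2) s = (g1 +++ g2) t" and u: "u \<in> {s..t}"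
  consider "t \<le> 1/2" | "1/2 < s" | "s \<le> 1/2" "1/2 < t"
    by linarith
  then show "(g1 +++ g2) u = (g1 +++ g2) s"
  proof cases
    case 1
    then show ?thesis
      using st u traversed_jordan_arcD[OF g1, of "2 * s" "2 * u" "2 * t"] by (simp add: joinpaths_def)
  next
    case 2
    then show ?thesis
      using st u traversed_jordan_arcD[OF g2, of "2 * s - 1" "2 * u - 1" "2 * t - 1"]
      by (simp add: joinpaths_def)
  next
    case 3
    have "g1 (2 * s) \<in> path_image g1" "g2 (2 * t - 1) \<in> path_image g2"
      using st 3 unfolding path_image_def by auto
    moreover have "g1 (2 * s) = g2 (2 * t - 1)"
      using st 3 by (simp add: joinpaths_def)
    ultimately have "g1 (2 * s) = g1 1" "g2 (2 * t - 1) = g2 0"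
      using meet ends unfolding pathstart_def pathfinish_def by auto
    then show ?thesis
      using st u 3 traversed_jordan_arcD[OF g1, of "2 * s" "2 * u" 1]
        traversed_jordan_arcD[OF g2, of 0 "2 * u - 1" "2 * t - 1"] ends
      unfolding pathstart_def pathfinish_def by (auto simp: joinpaths_def)
  qed
qed

lemma pathstart_join_list: "gs \<noteq> [] \<Longrightarrow> pathstart (join_list gs) = pathstart (hd gs)"
  by (induction gs rule: join_list.induct) auto

lemma path_image_join_list:
  assumes "gs \<noteq> []" "successively (\<lambda>g h. pathfinish g = pathstart h) gs"
  shows "path_image (join_list gs) = (\<Union>g\<in>set gs. path_image g)"
  using assms
proof (induction gs rule: join_list.induct)
  case (3 g h hs)
  then show ?case
    by (simp add: path_image_join pathstart_join_list)
qed auto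

lemma traversed_jordan_arc_join_list:
  assumes "gs \<noteq> []" "\<forall>g\<in>set gs. jordan_arc g"
    and "successively (\<lambda>g h. pathfinish g = pathstart h) gs"
    and "sorted_wrt (\<lambda>g h. path_image g \<inter> path_image h \<subseteq> {pathfinish g}) gs"
  shows "traversed_jordan_arc (join_list gs)"
  using assms
proof (induction gs rule: join_list.induct)
  case (2 g)
  then show ?case
    by (simp add: jordan_arc_imp_traversed_jordan_arc)
next
  case (3 g h hs)
  have meet: "path_image g \<inter> path_image (join_list (h # hs)) \<subseteq> {pathstart (join_list (h # hs))}"
    using "3.prems" by (auto simp: path_image_join_list pathstart_join_list)
  have "traversed_jordan_arc (g +++ join_list (h # hs))"
    by (rule traversed_jordan_arc_join)
      (use "3" meet in \<open>auto simp: jordan_arc_imp_traversed_jordan_arc pathstart_join_list\<close>)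
  then show ?case
    by simp
qed simp

lemma successively_upt_iff:
  "successively P [i..<j] \<longleftrightarrow> (\<forall>k. i \<le> k \<longrightarrow> Suc k < j \<longrightarrow> P k (Suc k))"
  unfolding successively_conv_nth
proof (intro iffI allI impI)
  fix k
  assume "\<forall>m. Suc m < length [i..<j] \<longrightarrow> P ([i..<j] ! m) ([i..<j] ! Suc m)"
    and "i \<le> k" "Suc k < j"
  then show "P k (Suc k)"
    by (auto dest: spec[of _ "k - i"])
qed auto

section \<open>Paths avoiding a set that ends along a ray\<close>

text \<open>Points off the ray see the point \<open>q\<close> behind its tip directly; as the ray has
  empty interior, every other point off \<open>F\<close> is close to such a point.\<close>
lemma path_component_near_ray_tip:
  fixes U F :: "'a::euclidean_space set"
  assumes dim: "2 \<le> DIM('a)" and U: "open U" and F: "closed F" and p: "p \<in> U"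
    and ray_like: "locally_in_ray F p"
  obtains q \<delta> where "0 < \<delta>" "ball p \<delta> \<subseteq> U" "closed_segment p q \<subseteq> U"
    "closed_segment p q \<inter> F \<subseteq> {p}" "\<And>x. x \<in> ball p \<delta> - F \<Longrightarrow> path_component (U - F) q x"
proof -
  obtain u \<delta>0 \<delta>1 where u: "u \<noteq> 0" and "0 < \<delta>0" "F \<inter> ball p \<delta>0 \<subseteq> ray p u"
    and "0 < \<delta>1" "ball p \<delta>1 \<subseteq> U"
    using ray_like U p openE unfolding locally_in_ray_def by metis
  moreover define \<delta> where "\<delta> = min \<delta>0 \<delta>1"
  ultimately have \<delta>: "0 < \<delta>" "ball p \<delta> \<subseteq> U" and F_ray: "F \<inter> ball p \<delta> \<subseteq> ray p u"
    by auto
  define c where "c = \<delta> / (2 * norm u)"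
  define q where "q = p - c *\<^sub>R u"
  have c: "0 < c"
    using \<delta> u unfolding c_def by simp
  have q: "q \<in> ball p \<delta>"
    using \<delta> u unfolding q_def c_def by (simp add: dist_norm)
  then have seg: "closed_segment p q \<subseteq> ball p \<delta>"
    using \<delta> by (simp add: closed_segment_subset convex_ball)
  have off_ray: "path_component (U - F) q x" if x: "x \<in> ball p \<delta>" "x \<notin> ray p u" for x
  proof (rule path_component_linepath)
    have "closed_segment q x \<subseteq> ball p \<delta>"
      using q x by (simp add: closed_segment_subset convex_ball)
    then show "closed_segment q x \<subseteq> U - F"
      using closed_segment_from_behind_tip_disjoint_ray[OF u c x(2)] \<delta>(2) F_ray
      unfolding q_def by blast
  qed
  show ?thesis
  proof
    show "closed_segment p q \<subseteq> U"
      using seg \<delta> by blast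
    show "closed_segment p q \<inter> F \<subseteq> {p}"
      using closed_segment_behind_tip_Int_ray[OF u less_imp_le[OF c]] seg F_ray
      unfolding q_def by blast
  next
    fix x assume x: "x \<in> ball p \<delta> - F"
    have "open (ball p \<delta> - F)"
      using F by blast
    then obtain r where r: "0 < r" "ball x r \<subseteq> ball p \<delta> - F"
      using x openE by blast
    moreover have "\<not> ball x r \<subseteq> ray p u"
      using interior_ray[OF dim, of p u] r(1) interior_maximal[of "ball x r" "ray p u"] by auto
    ultimately obtain x' where x': "x' \<in> ball x r" "x' \<notin> ray p u"
      by blast
    have "closed_segment x' x \<subseteq> ball x r"
      using x' r by (simp add: closed_segment_subset convex_ball)
    then have "path_component (U - F) x' x"
      using r \<delta> by (intro path_component_linepath) blast
    then show "path_component (U - F) q x"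
      using off_ray[of x'] x' r by (blast intro: path_component_trans)
  qed (use \<delta> in auto)
qed

lemma path_component_of_mem_closure:
  fixes S :: "'a::real_normed_vector set"
  assumes S: "open S" and x: "x \<in> S" "x \<in> closure (path_component_set S q)"
  shows "path_component S q x"
proof -
  have "path_component_set S x \<inter> closure (path_component_set S q) \<noteq> {}"
    using x path_component_refl by fastforce
  then obtain y where "path_component S x y" "path_component S q y"
    using open_Int_closure_eq_empty[OF open_path_component[OF S]] by blast
  then show ?thesis
    by (meson path_component_sym path_component_trans)
qed

text \<open>The points of \<open>C\<close> in \<open>Q \<union> {p}\<close> form a subset that is open and closed in \<open>C\<close>.\<close>
lemma connected_subset_path_component_insert:
  fixes U F C :: "'a::real_normed_vector set" and p q :: 'a
  defines "Q \<equiv> path_component_set (U - F) q"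
  assumes U: "open U" and F: "closed F" and \<delta>: "0 < \<delta>" and near: "ball p \<delta> - F \<subseteq> Q"
    and C: "connected C" "p \<in> C" "C \<inter> F \<subseteq> {p}" "C \<inter> closure Q \<subseteq> U"
  shows "C \<subseteq> Q \<union> {p}"
proof -
  have "open (Q \<union> ball p \<delta>)"
    unfolding Q_def using U F by (intro open_Un open_path_component open_Diff) auto
  then have "openin (top_of_set C) (C \<inter> (Q \<union> ball p \<delta>))"
    by (rule openin_open_Int)
  moreover have "C \<inter> (Q \<union> ball p \<delta>) = C \<inter> (Q \<union> {p})"
    using near C(3) \<delta> by auto
  ultimately have "openin (top_of_set C) (C \<inter> (Q \<union> {p}))"
    by (simp only:)
  moreover have "C \<inter> closure (Q \<union> {p}) \<subseteq> Q \<union> {p}"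
  proof
    fix x assume x: "x \<in> C \<inter> closure (Q \<union> {p})"
    show "x \<in> Q \<union> {p}"
    proof (cases "x = p")
      case False
      then have "x \<in> closure Q"
        using x by (simp add: closure_insert)
      moreover have "x \<in> U - F"
        using calculation x False C(3,4) by blast
      ultimately show ?thesis
        unfolding Q_def using U F by (simp add: path_component_of_mem_closure open_Diff)
    qed simp
  qed
  then have "C \<inter> (Q \<union> {p}) = C \<inter> closure (Q \<union> {p})"
    using closure_subset by blast
  then have "closedin (top_of_set C) (C \<inter> (Q \<union> {p}))"
    by (simp add: closedin_closed_Int)
  moreover have "C \<inter> (Q \<union> {p}) \<noteq> {}"
    using C(2) by blast
  ultimately have "C \<inter> (Q \<union> {p}) = C"
    using C(1) unfolding connected_clopen by (elim allE[of _ "C \<inter> (Q \<union> {p})"]) blast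
  then show ?thesis
    by blast
qed

text \<open>Leave \<open>p\<close> along the segment to the point \<open>q\<close> behind the tip of \<open>F\<close>: if the path
  component of \<open>q\<close> in \<open>U - F\<close> missed \<open>T\<close>, it would contain \<open>C - {p}\<close>, in
  particular \<open>c\<close>.\<close>
lemma path_to_closed_avoiding:
  fixes U F T C :: "'a::euclidean_space set"
  assumes dim: "2 \<le> DIM('a)" and U: "open U" and F: "closed F" and p: "p \<in> U"
    and ray_like: "locally_in_ray F p"
    and C: "connected C" "p \<in> C" "C \<inter> F \<subseteq> {p}" "C \<subseteq> U \<union> interior T \<union> - closure U"
    and c: "c \<in> C" "c \<in> T \<union> - U"
  obtains g where "path g" "pathstart g = p" "pathfinish g \<in> T" "path_image g \<subseteq> U"
    "path_image g \<inter> F \<subseteq> {p}"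
proof -
  obtain q \<delta> where \<delta>: "0 < \<delta>" and seg: "closed_segment p q \<subseteq> U" "closed_segment p q \<inter> F \<subseteq> {p}"
    and near: "\<And>x. x \<in> ball p \<delta> - F \<Longrightarrow> path_component (U - F) q x"
    using path_component_near_ray_tip[OF dim U F p ray_like] by metis
  define Q where "Q = path_component_set (U - F) q"
  have Q_U: "Q \<subseteq> U"
    unfolding Q_def using path_component_subset by blast
  have "p \<in> T \<or> Q \<inter> T \<noteq> {}"
  proof (rule ccontr)
    assume "\<not> ?thesis"
    then have pT: "p \<notin> T" and QT: "Q \<inter> T = {}"
      by auto
    have "interior T \<inter> closure Q = {}"
      using QT interior_subset open_Int_closure_eq_empty[of "interior T" Q] by blast
    moreover have "closure Q \<subseteq> closure U"
      using Q_U by (rule closure_mono)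
    ultimately have "C \<inter> closure Q \<subseteq> U"
      using C(4) by blast
    then have "C \<subseteq> Q \<union> {p}"
      using connected_subset_path_component_insert[OF U F \<delta> _ C(1-3)] near unfolding Q_def
      by blast
    then show False
      using c pT p QT Q_U by blast
  qed
  then show ?thesis
  proof
    assume "p \<in> T"
    then show ?thesis
      using that[of "linepath p p"] p by simp
  next
    assume "Q \<inter> T \<noteq> {}"
    then obtain z h where "z \<in> T" "path h" "path_image h \<subseteq> U - F" "pathstart h = q" "pathfinish h = z"
      unfolding Q_def path_component_def by blast
    moreover have "path_image (linepath p q +++ h) = closed_segment p q \<union> path_image h"
      using \<open>pathstart h = q\<close> by (simp add: path_image_join)
    ultimately show ?thesis
      using that[of "linepath p q +++ h"] seg by auto
  qed
qed

lemma exists_first_hit: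
  fixes f :: "real \<Rightarrow> 'a::topological_space"
  assumes f: "continuous_on {0..1} f" and T: "closed T" and f1: "f 1 \<in> T"
  obtains t where "t \<in> {0..1}" "f t \<in> T" "\<And>\<tau>. \<tau> \<in> {0..1} \<Longrightarrow> f \<tau> \<in> T \<Longrightarrow> t \<le> \<tau>"
proof -
  define K where "K = {0..1} \<inter> f -` T"
  have "closed K"
    unfolding K_def using f T by (intro continuous_closed_preimage) auto
  moreover have "1 \<in> K" "bdd_below K"
    unfolding K_def using f1 by auto
  ultimately have "Inf K \<in> K" "\<And>\<tau>. \<tau> \<in> K \<Longrightarrow> Inf K \<le> \<tau>"
    using closed_contains_Inf cInf_lower by blast+
  then show ?thesis
    using that unfolding K_def by blast
qed

lemma closed_segment_first_hit:
  fixes w y :: "'a::real_normed_vector"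
  assumes T: "closed T" and w: "w \<notin> T" and y: "y \<in> T"
  obtains y' where "y' \<in> closed_segment w y" "y' \<in> T" "closed_segment w y' \<inter> T = {y'}"
proof -
  obtain \<theta> where \<theta>: "\<theta> \<in> {0..1}" "linepath w y \<theta> \<in> T"
    and least: "\<And>\<mu>. \<mu> \<in> {0..1} \<Longrightarrow> linepath w y \<mu> \<in> T \<Longrightarrow> \<theta> \<le> \<mu>"
    using exists_first_hit[OF continuous_on_linepath T] y by (metis linepath_1')
  define y' where "y' = linepath w y \<theta>"
  have "closed_segment w y' \<inter> T \<subseteq> {y'}"
  proof
    fix z assume z: "z \<in> closed_segment w y' \<inter> T"
    then have "z \<in> closed_segment w y'"
      by blast
    then obtain \<mu> where \<mu>: "0 \<le> \<mu>" "\<mu> \<le> 1" and "z = (1 - \<mu>) *\<^sub>R w + \<mu> *\<^sub>R y'"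
      unfolding in_segment by blast
    then have "z = linepath w y (\<mu> * \<theta>)"
      unfolding y'_def linepath_def by (simp add: algebra_simps)
    moreover have "\<mu> * \<theta> \<in> {0..1}"
      using \<mu> \<theta>(1) by (simp add: mult_le_one)
    ultimately have "\<theta> \<le> \<mu> * \<theta>"
      using least z by blast
    moreover have "0 < \<theta>"
      using \<theta> w by (cases "\<theta> = 0") (auto simp: linepath_0')
    ultimately have "\<mu> = 1"
      using \<mu> by simp
    then show "z \<in> {y'}"
      using \<open>z = (1 - \<mu>) *\<^sub>R w + \<mu> *\<^sub>R y'\<close> by simp
  qed
  moreover have "y' \<in> closed_segment w y"
    unfolding y'_def using \<theta>(1) by (rule linepath_in_path)
  ultimately show ?thesis
    using that \<theta>(2) unfolding y'_def by blast
qed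

lemma locally_in_ray_Un_closed_segment:
  fixes G :: "'a::real_normed_vector set"
  assumes G: "compact G" "y \<notin> G" and w: "w \<noteq> y"
  shows "locally_in_ray (G \<union> closed_segment w y) y"
proof -
  obtain \<delta> where \<delta>: "0 < \<delta>" "ball y \<delta> \<subseteq> - G"
    using G compact_imp_closed open_Compl openE by (metis ComplI)
  then have "(G \<union> closed_segment w y) \<inter> ball y \<delta> \<subseteq> ray y (w - y)"
    using closed_segment_subset_ray[of y w] by (auto simp: closed_segment_commute)
  moreover have "w - y \<noteq> 0"
    using w by simp
  ultimately show ?thesis
    unfolding locally_in_ray_def using \<delta>(1) by blast
qed

lemma path_first_hit:
  fixes g :: "real \<Rightarrow> 'a::topological_space"
  assumes g: "path g" "pathstart g \<notin> T" "pathfinish g \<in> T" and T: "closed T"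
  obtains t where "0 < t" "t \<le> 1" "g t \<in> T" "g ` {0..<t} \<inter> T = {}"
proof -
  obtain t where t: "t \<in> {0..1}" "g t \<in> T" and least: "\<And>\<tau>. \<tau> \<in> {0..1} \<Longrightarrow> g \<tau> \<in> T \<Longrightarrow> t \<le> \<tau>"
    using exists_first_hit[OF _ T, of g] g unfolding path_def pathfinish_def by metis
  show ?thesis
  proof (rule that)
    show "0 < t"
      using t g(2) unfolding pathstart_def by (cases "t = 0") auto
    have "g \<tau> \<notin> T" if "\<tau> \<in> {0..<t}" for \<tau>
      using that t least[of \<tau>] by force
    then show "g ` {0..<t} \<inter> T = {}"
      by blast
  qed (use t in auto)
qed

text \<open>Stop the path at its first point \<open>g t\<close> of \<open>T\<close>, back up to a point \<open>w\<close> of the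
  path near \<open>g t\<close>, and finish along the segment from \<open>w\<close> towards \<open>g t\<close> up to its
  first point of \<open>T\<close>.\<close>
lemma path_to_closed_ending_in_ray:
  fixes g :: "real \<Rightarrow> 'a::real_normed_vector"
  assumes g: "path g" "pathstart g = p" "pathfinish g \<in> T" and p: "p \<notin> T"
    and T: "closed T" and U: "open U" and F: "closed F"
    and g_U: "path_image g \<subseteq> U" and g_F: "path_image g \<inter> F \<subseteq> {p}"
  obtains \<pi> y where "path \<pi>" "pathstart \<pi> = p" "pathfinish \<pi> = y" "path_image \<pi> \<subseteq> U"
    "path_image \<pi> \<inter> F \<subseteq> {p}" "path_image \<pi> \<inter> T = {y}" "locally_in_ray (path_image \<pi>) y"
proof -
  obtain t where t: "0 < t" "t \<le> 1" "g t \<in> T" and before: "g ` {0..<t} \<inter> T = {}"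
    using path_first_hit[OF g(1) _ g(3) T] g(2) p by metis
  have "g t \<in> path_image g" "g t \<noteq> p"
    using t p unfolding path_image_def by auto
  then have "g t \<in> U - F"
    using g_U g_F by blast
  then obtain \<epsilon> where \<epsilon>: "0 < \<epsilon>" "ball (g t) \<epsilon> \<subseteq> U - F"
    using U F open_Diff openE by metis
  have g_cont: "continuous_on {0..1} g"
    using g(1) unfolding path_def .
  moreover have "t \<in> {0..1}"
    using t by simp
  ultimately obtain \<eta> where \<eta>: "0 < \<eta>"
    and near_t: "\<And>\<tau>. \<tau> \<in> {0..1} \<Longrightarrow> dist \<tau> t < \<eta> \<Longrightarrow> dist (g \<tau>) (g t) < \<epsilon>"
    using \<epsilon>(1) unfolding continuous_on_iff by metis
  define s where "s = max 0 (t - \<eta> / 2)"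
  define w where "w = g s"
  define G where "G = g ` {0..s}"
  have s: "{0..s} \<subseteq> {0..<t}" "{0..s} \<subseteq> {0..1}" "dist s t < \<eta>" "0 \<le> s"
    using t \<eta> unfolding s_def dist_real_def by auto
  have w: "w \<in> ball (g t) \<epsilon>" "w \<in> G"
    using near_t[of s] s unfolding w_def G_def by (auto simp: dist_commute)
  have G: "compact G" "G \<subseteq> path_image g" "G \<inter> T = {}"
    using s before unfolding G_def path_image_def
    by (auto intro!: compact_continuous_image intro: continuous_on_subset[OF g_cont])
  then obtain y where y: "y \<in> closed_segment w (g t)" "y \<in> T" "closed_segment w y \<inter> T = {y}"
    using closed_segment_first_hit[OF T _ t(3)] w(2) by blast
  have "closed_segment w (g t) \<subseteq> ball (g t) \<epsilon>"
    using w(1) \<epsilon>(1) by (simp add: closed_segment_subset convex_ball)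
  moreover have "closed_segment w y \<subseteq> closed_segment w (g t)"
    using y(1) by (simp add: closed_segment_subset)
  ultimately have seg: "closed_segment w y \<subseteq> U - F"
    using \<epsilon>(2) by blast
  define \<pi> where "\<pi> = subpath 0 s g +++ linepath w y"
  have \<pi>_image: "path_image \<pi> = G \<union> closed_segment w y"
    unfolding \<pi>_def G_def w_def using s by (subst path_image_join) (auto simp: path_image_subpath)
  show ?thesis
  proof (rule that)
    show "path \<pi>" "pathstart \<pi> = p" "pathfinish \<pi> = y"
      unfolding \<pi>_def w_def using g s by (auto intro!: path_join_imp) (simp add: pathstart_def)
    show "path_image \<pi> \<subseteq> U" "path_image \<pi> \<inter> F \<subseteq> {p}" "path_image \<pi> \<inter> T = {y}"
      unfolding \<pi>_image using G g_U g_F seg y by blast+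
    show "locally_in_ray (path_image \<pi>) y"
      unfolding \<pi>_image using G w(2) y by (intro locally_in_ray_Un_closed_segment) auto
  qed
qed

lemma jordan_arc_to_closed_ending_in_ray:
  fixes U F T C :: "'a::euclidean_space set"
  assumes dim: "2 \<le> DIM('a)" and U: "open U" and F: "closed F" and T: "closed T"
    and p: "p \<in> U" "locally_in_ray F p"
    and C: "connected C" "p \<in> C" "C \<inter> F \<subseteq> {p}" "C \<subseteq> U \<union> interior T \<union> - closure U"
    and c: "c \<in> C" "c \<in> T \<union> - U"
  obtains \<beta> where "jordan_arc \<beta>" "pathstart \<beta> = p" "path_image \<beta> \<subseteq> U"
    "path_image \<beta> \<inter> F \<subseteq> {p}" "path_image \<beta> \<inter> T = {pathfinish \<beta>}"
    "locally_in_ray (path_image \<beta>) (pathfinish \<beta>)"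
proof (cases "p \<in> T")
  case True
  show ?thesis
  proof (rule that)
    show "jordan_arc (linepath p p)"
      by (rule jordan_arc_linepath_refl)
    show "locally_in_ray (path_image (linepath p p)) (pathfinish (linepath p p))"
      using locally_in_ray_singleton by simp
  qed (use True p(1) in auto)
next
  case False
  obtain g where "path g" "pathstart g = p" "pathfinish g \<in> T" "path_image g \<subseteq> U"
    "path_image g \<inter> F \<subseteq> {p}"
    using path_to_closed_avoiding[OF dim U F p C c] by metis
  then obtain \<pi> y where \<pi>: "path \<pi>" "pathstart \<pi> = p" "pathfinish \<pi> = y" "path_image \<pi> \<subseteq> U"
    "path_image \<pi> \<inter> F \<subseteq> {p}" "path_image \<pi> \<inter> T = {y}" "locally_in_ray (path_image \<pi>) y"
    using path_to_closed_ending_in_ray[OF _ _ _ False T U F] by metis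
  then have "p \<noteq> y"
    using False by blast
  then obtain \<alpha> where \<alpha>: "arc \<alpha>" "path_image \<alpha> \<subseteq> path_image \<pi>" "pathstart \<alpha> = p" "pathfinish \<alpha> = y"
    using path_contains_arc[OF \<pi>(1-3)] by blast
  show ?thesis
  proof (rule that)
    show "jordan_arc \<alpha>"
      using \<alpha>(1) unfolding jordan_arc_def by simp
    show "path_image \<alpha> \<inter> T = {pathfinish \<alpha>}"
      using \<alpha>(2,4) \<pi>(6) pathfinish_in_path_image[of \<alpha>] by blast
    show "locally_in_ray (path_image \<alpha>) (pathfinish \<alpha>)"
      using \<alpha>(2,4) \<pi>(7) locally_in_ray_subset by metis
  qed (use \<alpha> \<pi> in auto)
qed

section \<open>The chain of arcs\<close>

locale region_chain =
  fixes n :: nat and a a' a'' :: "nat \<Rightarrow> 'a::euclidean_space set" and p0 pn :: 'a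
  assumes dim: "2 \<le> DIM('a)"
    and two_le_n: "2 \<le> n"
    and closed_a: "\<And>i. i \<in> {1..n} \<Longrightarrow> closed (a i)"
    and closed_a': "\<And>i. i \<in> {1..n} \<Longrightarrow> closed (a' i)"
    and a'_interior: "\<And>i. i \<in> {1..n} \<Longrightarrow> a' i \<subseteq> interior (a i)"
    and a''_interior: "\<And>i. i \<in> {1..n} \<Longrightarrow> a'' i \<subseteq> interior (a' i)"
    and connected_tail: "\<And>i. i \<in> {1..<n} \<Longrightarrow> connected (a' i \<union> (\<Union>j\<in>{i+1..n}. a'' j))"
    and connected_last: "connected (a' n)"
    and disjoint: "\<And>i j. i \<in> {1..n} \<Longrightarrow> j \<in> {1..n} \<Longrightarrow> i + 1 < j \<Longrightarrow> a i \<inter> a j = {}"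
    and p0: "p0 \<in> a' 1" and pn: "pn \<in> a'' n"
begin

lemma a''_subset_a: "i \<in> {1..n} \<Longrightarrow> a'' i \<subseteq> a i"
  using a'_interior a''_interior interior_subset by blast

lemma tail_subset:
  assumes "i \<in> {1..<n}"
  shows "a' i \<union> (\<Union>j\<in>{i + 1..n}. a'' j) \<subseteq> interior (a i) \<union> interior (a' (Suc i)) \<union> - a i"
proof
  have i: "i \<in> {1..n}"
    using assms by simp
  fix x assume x: "x \<in> a' i \<union> (\<Union>j\<in>{i + 1..n}. a'' j)"
  show "x \<in> interior (a i) \<union> interior (a' (Suc i)) \<union> - a i"
  proof (cases "x \<in> a' i")
    case True
    then show ?thesis
      using a'_interior[OF i] by blast
  next
    case False
    then obtain j where j: "j \<in> {i + 1..n}" "x \<in> a'' j"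
      using x by blast
    show ?thesis
    proof (cases "j = Suc i")
      case True
      then show ?thesis
        using j a''_interior by auto
    next
      case False
      then have "x \<in> a j" "a i \<inter> a j = {}"
        using j a''_subset_a[of j] disjoint[of i j] assms by auto
      then show ?thesis
        by blast
    qed
  qed
qed

lemma pn_in_next_or_outside:
  assumes "i \<in> {1..<n}"
  shows "pn \<in> a' (Suc i) \<union> - a i"
proof (cases "n = Suc i")
  case True
  then show ?thesis
    using pn a''_interior[of n] interior_subset by auto
next
  case False
  then have "pn \<in> a n" "a i \<inter> a n = {}"
    using pn a''_subset_a[of n] disjoint[of i n] assms by auto
  then show ?thesis
    by blast
qed

text \<open>The constant path \<open>\<alpha> 0\<close> at \<open>p0\<close> lets \<open>k = 0\<close> be treated like the other cases.\<close>
definition arcs_upto :: "nat \<Rightarrow> (nat \<Rightarrow> real \<Rightarrow> 'a) \<Rightarrow> bool" where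
  "arcs_upto k \<alpha> \<longleftrightarrow>
     \<alpha> 0 = linepath p0 p0 \<and>
     (\<forall>i\<in>{1..k}. jordan_arc (\<alpha> i) \<and> pathstart (\<alpha> i) = pathfinish (\<alpha> (i - 1)) \<and>
        path_image (\<alpha> i) \<subseteq> a i) \<and>
     (\<forall>i<k. path_image (\<alpha> i) \<inter> path_image (\<alpha> (Suc i)) \<subseteq> {pathfinish (\<alpha> i)}) \<and>
     (\<forall>i<k. pathfinish (\<alpha> i) \<in> a' (Suc i))"

text \<open>The last arc meets \<open>a' (k + 1)\<close> only at its endpoint and ends along a ray, so
  the next arc can leave that endpoint without crossing it.\<close>
definition chain_upto :: "nat \<Rightarrow> (nat \<Rightarrow> real \<Rightarrow> 'a) \<Rightarrow> bool" where
  "chain_upto k \<alpha> \<longleftrightarrow> arcs_upto k \<alpha> \<and>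
     path_image (\<alpha> k) \<inter> a' (Suc k) = {pathfinish (\<alpha> k)} \<and>
     locally_in_ray (path_image (\<alpha> k)) (pathfinish (\<alpha> k))"

lemma
  assumes "arcs_upto k \<alpha>"
  shows arcs_upto_zero: "\<alpha> 0 = linepath p0 p0"
    and arcs_upto_arc: "\<And>i. i \<in> {1..k} \<Longrightarrow> jordan_arc (\<alpha> i) \<and>
      pathstart (\<alpha> i) = pathfinish (\<alpha> (i - 1)) \<and> path_image (\<alpha> i) \<subseteq> a i"
    and arcs_upto_adjacent:
      "\<And>i. i < k \<Longrightarrow> path_image (\<alpha> i) \<inter> path_image (\<alpha> (Suc i)) \<subseteq> {pathfinish (\<alpha> i)}"
    and arcs_upto_ends: "\<And>i. i < k \<Longrightarrow> pathfinish (\<alpha> i) \<in> a' (Suc i)"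
  using assms unfolding arcs_upto_def by auto

lemma arcs_upto_fun_upd:
  assumes arcs: "arcs_upto k \<alpha>" and end_k: "pathfinish (\<alpha> k) \<in> a' (Suc k)"
    and \<beta>: "jordan_arc \<beta>" "pathstart \<beta> = pathfinish (\<alpha> k)" "path_image \<beta> \<subseteq> a (Suc k)"
      "path_image (\<alpha> k) \<inter> path_image \<beta> \<subseteq> {pathfinish (\<alpha> k)}"
  shows "arcs_upto (Suc k) (\<alpha>(Suc k := \<beta>))"
proof -
  define \<alpha>' where "\<alpha>' = \<alpha>(Suc k := \<beta>)"
  have old: "\<alpha>' i = \<alpha> i" if "i \<le> k" for i
    using that unfolding \<alpha>'_def by simp
  have new: "\<alpha>' (Suc k) = \<beta>"
    unfolding \<alpha>'_def by simp
  have start: "\<alpha>' 0 = linepath p0 p0"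
    using arcs_upto_zero[OF arcs] old[of 0] by simp
  have arc: "\<forall>i\<in>{1..Suc k}. jordan_arc (\<alpha>' i) \<and> pathstart (\<alpha>' i) = pathfinish (\<alpha>' (i - 1)) \<and>
      path_image (\<alpha>' i) \<subseteq> a i"
  proof
    fix i assume i: "i \<in> {1..Suc k}"
    show "jordan_arc (\<alpha>' i) \<and> pathstart (\<alpha>' i) = pathfinish (\<alpha>' (i - 1)) \<and> path_image (\<alpha>' i) \<subseteq> a i"
    proof (cases "i = Suc k")
      case True
      then show ?thesis
        using \<beta> new old[of k] by simp
    next
      case False
      then have "i \<in> {1..k}" "i \<le> k" "i - 1 \<le> k"
        using i by auto
      then show ?thesis
        using arcs_upto_arc[OF arcs, of i] old[of i] old[of "i - 1"] by simp
    qed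
  qed
  have adjacent: "\<forall>i<Suc k. path_image (\<alpha>' i) \<inter> path_image (\<alpha>' (Suc i)) \<subseteq> {pathfinish (\<alpha>' i)}"
  proof (intro allI impI)
    fix i assume i: "i < Suc k"
    show "path_image (\<alpha>' i) \<inter> path_image (\<alpha>' (Suc i)) \<subseteq> {pathfinish (\<alpha>' i)}"
    proof (cases "i = k")
      case True
      then show ?thesis
        using \<beta> new old[of k] by simp
    next
      case False
      then have "i < k" "i \<le> k" "Suc i \<le> k"
        using i by auto
      then show ?thesis
        using arcs_upto_adjacent[OF arcs, of i] old[of i] old[of "Suc i"] by simp
    qed
  qed
  have ends: "\<forall>i<Suc k. pathfinish (\<alpha>' i) \<in> a' (Suc i)"
  proof (intro allI impI)
    fix i assume i: "i < Suc k"
    then have "pathfinish (\<alpha> i) \<in> a' (Suc i)"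
      using end_k arcs_upto_ends[OF arcs, of i] by (cases "i = k") auto
    then show "pathfinish (\<alpha>' i) \<in> a' (Suc i)"
      using old[of i] i by simp
  qed
  show ?thesis
    using start arc adjacent ends unfolding arcs_upto_def \<alpha>'_def by (simp only:)
qed

lemma chain_upto_0: "chain_upto 0 (\<lambda>_. linepath p0 p0)"
  unfolding chain_upto_def arcs_upto_def using p0 locally_in_ray_singleton by simp

lemma
  assumes "chain_upto k \<alpha>"
  shows chain_upto_arcs_upto: "arcs_upto k \<alpha>"
    and chain_upto_last: "path_image (\<alpha> k) \<inter> a' (Suc k) = {pathfinish (\<alpha> k)}"
    and chain_upto_last_ray: "locally_in_ray (path_image (\<alpha> k)) (pathfinish (\<alpha> k))"
  using assms unfolding chain_upto_def by auto

lemma chain_upto_path_last: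
  assumes "chain_upto k \<alpha>"
  shows "path (\<alpha> k)"
proof (cases k)
  case 0
  then show ?thesis
    using arcs_upto_zero[OF chain_upto_arcs_upto[OF assms]] by simp
next
  case (Suc m)
  then show ?thesis
    using arcs_upto_arc[OF chain_upto_arcs_upto[OF assms], of k] by (simp add: jordan_arc_imp_path)
qed

lemma chain_upto_last_Int_far:
  assumes "chain_upto k \<alpha>" "j \<in> {k + 2..n}"
  shows "path_image (\<alpha> k) \<inter> a j \<subseteq> {pathfinish (\<alpha> k)}"
proof (cases k)
  case 0
  then show ?thesis
    using arcs_upto_zero[OF chain_upto_arcs_upto[OF assms(1)]] by simp
next
  case (Suc m)
  then have "path_image (\<alpha> k) \<subseteq> a k" "a k \<inter> a j = {}"
    using arcs_upto_arc[OF chain_upto_arcs_upto[OF assms(1)], of k] disjoint[of k j] assms(2)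
    by auto
  then show ?thesis
    by blast
qed

lemma chain_upto_Suc:
  assumes chain: "chain_upto k \<alpha>" and k: "Suc k < n"
  obtains \<beta> where "chain_upto (Suc k) (\<alpha>(Suc k := \<beta>))"
proof -
  define F where "F = path_image (\<alpha> k)"
  define q where "q = pathfinish (\<alpha> k)"
  define U where "U = interior (a (Suc k))"
  define T where "T = a' (Suc (Suc k))"
  define C where "C = a' (Suc k) \<union> (\<Union>j\<in>{Suc k + 1..n}. a'' j)"
  have last: "F \<inter> a' (Suc k) = {q}" "locally_in_ray F q"
    using chain_upto_last[OF chain] chain_upto_last_ray[OF chain] unfolding F_def q_def by auto
  have range: "Suc k \<in> {1..<n}" "Suc k \<in> {1..n}" "Suc (Suc k) \<in> {1..n}"
    using k by auto
  have U: "open U" "q \<in> U"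
    using last(1) a'_interior[OF range(2)] unfolding U_def by blast+
  have T: "closed T"
    unfolding T_def using closed_a'[OF range(3)] .
  have F: "closed F"
    unfolding F_def using chain_upto_path_last[OF chain] by (simp add: closed_path_image)
  have C: "connected C" "q \<in> C"
    unfolding C_def using connected_tail[OF range(1)] last(1) by auto
  have "F \<inter> a'' j \<subseteq> {q}" if "j \<in> {Suc k + 1..n}" for j
    using chain_upto_last_Int_far[OF chain, of j] a''_subset_a[of j] that
    unfolding F_def q_def by auto
  then have C_F: "C \<inter> F \<subseteq> {q}"
    using last(1) unfolding C_def by blast
  have "closure U \<subseteq> a (Suc k)"
    unfolding U_def using closed_a[OF range(2)] by (simp add: closure_minimal interior_subset)
  then have C_cover: "C \<subseteq> U \<union> interior T \<union> - closure U" and pn_C: "pn \<in> C"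
    and pn_T: "pn \<in> T \<union> - U"
    using tail_subset[OF range(1)] pn_in_next_or_outside[OF range(1)] pn k interior_subset
    unfolding U_def T_def C_def by auto
  obtain \<beta> where \<beta>: "jordan_arc \<beta>" "pathstart \<beta> = q" "path_image \<beta> \<subseteq> U"
    "path_image \<beta> \<inter> F \<subseteq> {q}" "path_image \<beta> \<inter> T = {pathfinish \<beta>}"
    "locally_in_ray (path_image \<beta>) (pathfinish \<beta>)"
    using jordan_arc_to_closed_ending_in_ray[OF dim U(1) F T U(2) last(2) C C_F C_cover pn_C pn_T]
    by blast
  have "arcs_upto (Suc k) (\<alpha>(Suc k := \<beta>))"
  proof (rule arcs_upto_fun_upd[OF chain_upto_arcs_upto[OF chain]])
    show "pathfinish (\<alpha> k) \<in> a' (Suc k)"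
      using last(1) unfolding F_def q_def by blast
    show "path_image \<beta> \<subseteq> a (Suc k)"
      using \<beta>(3) interior_subset unfolding U_def by blast
  qed (use \<beta> in \<open>auto simp: F_def q_def\<close>)
  then have "chain_upto (Suc k) (\<alpha>(Suc k := \<beta>))"
    using \<beta>(5,6) unfolding chain_upto_def T_def by simp
  then show ?thesis
    using that by blast
qed

lemma chain_upto_exists: "k < n \<Longrightarrow> \<exists>\<alpha>. chain_upto k \<alpha>"
proof (induction k)
  case 0
  then show ?case
    using chain_upto_0 by blast
next
  case (Suc k)
  then show ?case
    using chain_upto_Suc by (metis Suc_lessD)
qed

lemma last_arc_exists:
  assumes chain: "chain_upto (n - 1) \<alpha>"
  obtains \<gamma> where "jordan_arc \<gamma>" "pathstart \<gamma> = pathfinish (\<alpha> (n - 1))" "pathfinish \<gamma> = pn"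
    "path_image \<gamma> \<subseteq> a n" "path_image (\<alpha> (n - 1)) \<inter> path_image \<gamma> \<subseteq> {pathfinish (\<alpha> (n - 1))}"
proof -
  define F where "F = path_image (\<alpha> (n - 1))"
  define q where "q = pathfinish (\<alpha> (n - 1))"
  have n: "n \<in> {1..n}" "Suc (n - 1) = n"
    using two_le_n by auto
  have last: "F \<inter> a' n = {q}" "locally_in_ray F q"
    using chain_upto_last[OF chain] chain_upto_last_ray[OF chain] n(2) unfolding F_def q_def by auto
  have q: "q \<in> interior (a n)"
    using last(1) a'_interior[OF n(1)] by blast
  have F: "closed F"
    unfolding F_def using chain_upto_path_last[OF chain] by (simp add: closed_path_image)
  have "pn \<in> a' n"
    using pn a''_interior[OF n(1)] interior_subset by blast
  then obtain g where g: "path g" "pathstart g = q" "pathfinish g \<in> {pn}"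
    "path_image g \<subseteq> interior (a n)" "path_image g \<inter> F \<subseteq> {q}"
    using path_to_closed_avoiding[OF dim open_interior F q last(2) connected_last,
        where c = pn and T = "{pn}"]
      last(1) a'_interior[OF n(1)] by blast
  then obtain \<gamma> where "jordan_arc \<gamma>" "pathstart \<gamma> = q" "pathfinish \<gamma> = pn"
    "path_image \<gamma> \<subseteq> path_image g"
    using exists_jordan_arc_in_path_image by (metis singletonD)
  then show ?thesis
    using that g interior_subset unfolding F_def q_def by blast
qed

lemma traversed_jordan_arc_arcs_upto:
  assumes arcs: "arcs_upto k \<alpha>" and k: "1 \<le> k" "k \<le> n"
  shows "traversed_jordan_arc (join_list (map \<alpha> [1..<k+1]))"
proof (rule traversed_jordan_arc_join_list)
  have set_upt: "set [1..<k + 1] = {1..k}"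
    by auto
  show "map \<alpha> [1..<k + 1] \<noteq> []"
    using k by simp
  show "\<forall>g\<in>set (map \<alpha> [1..<k + 1]). jordan_arc g"
    using arcs_upto_arc[OF arcs] unfolding set_map set_upt by blast
  have "\<forall>i. 1 \<le> i \<longrightarrow> Suc i < k + 1 \<longrightarrow> pathfinish (\<alpha> i) = pathstart (\<alpha> (Suc i))"
    using arcs_upto_arc[OF arcs] by simp
  then show "successively (\<lambda>g h. pathfinish g = pathstart h) (map \<alpha> [1..<k + 1])"
    unfolding successively_map successively_upt_iff by simp
  have far: "path_image (\<alpha> i) \<inter> path_image (\<alpha> j) \<subseteq> {pathfinish (\<alpha> i)}"
    if "i \<in> set [1..<k + 1]" "j \<in> set [1..<k + 1]" "i < j" for i j
  proof (cases "j = Suc i")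
    case True
    moreover have "i < k"
      using that True by auto
    ultimately show ?thesis
      using arcs_upto_adjacent[OF arcs] by simp
  next
    case False
    then have ij: "i \<in> {1..k}" "j \<in> {1..k}" "i + 1 < j"
      using that unfolding set_upt by auto
    then have "a i \<inter> a j = {}"
      using disjoint[of i j] k by auto
    moreover have "path_image (\<alpha> i) \<subseteq> a i" "path_image (\<alpha> j) \<subseteq> a j"
      using arcs_upto_arc[OF arcs ij(1)] arcs_upto_arc[OF arcs ij(2)] by simp_all
    ultimately show ?thesis
      by blast
  qed
  show "sorted_wrt (\<lambda>g h. path_image g \<inter> path_image h \<subseteq> {pathfinish g}) (map \<alpha> [1..<k + 1])"
    unfolding sorted_wrt_map by (rule sorted_wrt_mono_rel[OF far sorted_wrt_upt])
qed

lemma arc_chain_exists: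
  "\<exists>(p :: nat \<Rightarrow> 'a) (\<alpha> :: nat \<Rightarrow> real \<Rightarrow> 'a).
     p 0 = p0 \<and> p n = pn \<and>
     (\<forall>i\<in>{1..n}. jordan_arc (\<alpha> i) \<and> pathstart (\<alpha> i) = p (i - 1) \<and> pathfinish (\<alpha> i) = p i) \<and>
     traversed_jordan_arc (join_list (map \<alpha> [1..<n+1])) \<and>
     (\<forall>i\<in>{1..<n}. p i \<in> a' (i + 1) \<inter> path_image (\<alpha> i)) \<and>
     (\<forall>i\<in>{1..n}. path_image (\<alpha> i) \<subseteq> a i)"
proof -
  have n: "n - 1 < n" "Suc (n - 1) = n"
    using two_le_n by auto
  obtain \<alpha> where chain: "chain_upto (n - 1) \<alpha>"
    using chain_upto_exists[OF n(1)] by blast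
  obtain \<gamma> where \<gamma>: "jordan_arc \<gamma>" "pathstart \<gamma> = pathfinish (\<alpha> (n - 1))" "pathfinish \<gamma> = pn"
    "path_image \<gamma> \<subseteq> a n" "path_image (\<alpha> (n - 1)) \<inter> path_image \<gamma> \<subseteq> {pathfinish (\<alpha> (n - 1))}"
    using last_arc_exists[OF chain] by blast
  define \<alpha>' where "\<alpha>' = \<alpha>(n := \<gamma>)"
  have "pathfinish (\<alpha> (n - 1)) \<in> a' (Suc (n - 1))"
    using chain_upto_last[OF chain] by blast
  then have arcs: "arcs_upto n \<alpha>'"
    using arcs_upto_fun_upd[OF chain_upto_arcs_upto[OF chain] _ \<gamma>(1,2)] \<gamma>(4,5) n(2)
    unfolding \<alpha>'_def by simp
  have "\<alpha>' 0 = linepath p0 p0" "\<alpha>' n = \<gamma>"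
    using arcs_upto_zero[OF arcs] unfolding \<alpha>'_def by simp_all
  moreover have "traversed_jordan_arc (join_list (map \<alpha>' [1..<n+1]))"
    using traversed_jordan_arc_arcs_upto[OF arcs] two_le_n by simp
  ultimately show ?thesis
    using arcs_upto_arc[OF arcs] arcs_upto_ends[OF arcs] \<gamma>(3) pathfinish_in_path_image
    by (intro exI[of _ "\<lambda>i. pathfinish (\<alpha>' i)"] exI[of _ \<alpha>']) auto
qed

end

theorem lemma5p6:
  fixes n :: nat
    and a a' a'' :: "nat \<Rightarrow> (real^2) set"
  assumes "n \<ge> 2"
    and "\<forall>i\<in>{1..n}. regular_closed (a i) \<and> regular_closed (a' i) \<and> regular_closed (a'' i)"
    and "\<forall>i\<in>{1..n}. a'' i \<noteq> {}"
    and "\<forall>i\<in>{1..n}. a'' i \<inter> closure (UNIV - a' i) = {}"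
    and "\<forall>i\<in>{1..n}. a' i \<inter> closure (UNIV - a i) = {}"
    and "\<forall>i\<in>{1..n-1}. connected (a' i \<union> (\<Union>j\<in>{i+1..n}. a'' j))"
    and "connected (a' n)"
    and "\<forall>i\<in>{1..n}. \<forall>j\<in>{1..n}. j > i + 1 \<longrightarrow> a i \<inter> a j = {}"
  shows "\<forall>p0\<in>a' 1. \<forall>pn\<in>a'' n. \<exists>(p :: nat \<Rightarrow> real^2) (\<alpha> :: nat \<Rightarrow> real \<Rightarrow> real^2).
           p 0 = p0 \<and> p n = pn \<and>
           (\<forall>i\<in>{1..n}. jordan_arc (\<alpha> i) \<and> pathstart (\<alpha> i) = p (i - 1) \<and> pathfinish (\<alpha> i) = p i) \<and>
           traversed_jordan_arc (join_list (map \<alpha> [1..<n+1])) \<and>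
           (\<forall>i\<in>{1..<n}. p i \<in> a' (i + 1) \<inter> path_image (\<alpha> i)) \<and>
           (\<forall>i\<in>{1..n}. path_image (\<alpha> i) \<subseteq> a i)"
proof -
  have closed: "closed S" if "regular_closed S" for S :: "(real^2) set"
    using that unfolding regular_closed_def by (metis closed_closure)
  have inside: "A \<subseteq> interior B" if "A \<inter> closure (UNIV - B) = {}" for A B :: "(real^2) set"
    using that closure_complement[of B] by (auto simp: Compl_eq_Diff_UNIV)
  have "region_chain n a a' a'' p0 pn" if "p0 \<in> a' 1" "pn \<in> a'' n" for p0 pn
  proof unfold_locales
    show "2 \<le> DIM(real^2)" "2 \<le> n" "connected (a' n)" "p0 \<in> a' 1" "pn \<in> a'' n"
      using assms(1,7) that by simp_all
    show "closed (a i)" "closed (a' i)" if "i \<in> {1..n}" for i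
      using assms(2) that closed by blast+
    show "a' i \<subseteq> interior (a i)" "a'' i \<subseteq> interior (a' i)" if "i \<in> {1..n}" for i
      using assms(4,5) that inside by blast+
    show "connected (a' i \<union> (\<Union>j\<in>{i+1..n}. a'' j))" if "i \<in> {1..<n}" for i
      using assms(6) that by auto
    show "a i \<inter> a j = {}" if "i \<in> {1..n}" "j \<in> {1..n}" "i + 1 < j" for i j
      using assms(8) that by auto
  qed
  then show ?thesis
    using region_chain.arc_chain_exists by blast
qed

end
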